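(* Let $(X_n)$ be a finite Markov chain with transition matrix $P$ in which state $k$ is absorbing and, from every state, $k$ is reachable; all states other than $k$ are transient. Let $F^{k}=(I-P_{\mathcal T\mathcal T})^{-1}$, $\mathcal T$ the set of states other than $k$, be its fundamental matrix. Let $s,m,t$ be states different from $k$ with $s\neq t$, $m\neq t$ and $F^k_{st}>0$. Then the avoidance fundamental matrix satisfies $$F_{sm}^{\{t,\overline{k}\}}=F_{mt}^k\left(\frac{F_{sm}^k}{F_{st}^k}-\frac{F_{tm}^k}{F_{tt}^k}\right).$$
   Context: For a finite Markov chain with transition matrix $P$ and a set $\mathcal A$ of states made absorbing (their rows replaced by unit rows), with transient set $\mathcal T$ (complement of $\mathcal A$) from which $\mathcal A$ is reachable, the fundamental matrix is $F^{\mathcal A}=(I-P_{\mathcal T\mathcal T})^{-1}$; $F^{\mathcal A}_{sm}$ is the expected number of visits to $m$ starting from $s$ before absorption. For $t\in\mathcal A$, $Q_s^{\{t,\overline{\mathcal A\setminus\{t\}}\}}$ denotes the probability that the chain started at $s$ is absorbed at $t$ (i.e. the first absorbing state hit is $t$). For two states $t,k$, the avoidance fundamental matrix is defined by $F^{\{t,\overline{k}\}}_{sm}=F^{\{t,k\}}_{sm}\,\dfrac{Q_m^{\{t,\overline{k}\}}}{Q_s^{\{t,\overline{k}\}}}$, where $F^{\{t,k\}}$ is the fundamental matrix with absorbing set $\{t,k\}$ and $Q^{\{t,\overline k\}}_x$ is the probability that, with absorbing set $\{t,k\}$, the chain from $x$ is absorbed at $t$. *)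

theory Defs
  imports Complex_Main
begin

definition stochastic :: "('a::finite \<Rightarrow> 'a \<Rightarrow> real) \<Rightarrow> bool" where
  "stochastic P \<longleftrightarrow> (\<forall>i j. 0 \<le> P i j) \<and> (\<forall>i. (\<Sum>j\<in>UNIV. P i j) = 1)"

text \<open>Fundamental matrix for absorbing set A: the matrix F indexed by the transient set
  T = -A with (I - P_TT) F = I (entries outside T x T set to 0).\<close>
definition fund_mat :: "('a::finite \<Rightarrow> 'a \<Rightarrow> real) \<Rightarrow> 'a set \<Rightarrow> 'a \<Rightarrow> 'a \<Rightarrow> real" where
  "fund_mat P A = (THE F.
     (\<forall>s m. s \<notin> A \<and> m \<notin> A \<longrightarrow>
        (\<Sum>j\<in>-A. ((if s = j then 1 else 0) - P s j) * F j m) = (if s = m then 1 else 0)) \<and>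
     (\<forall>s m. s \<in> A \<or> m \<in> A \<longrightarrow> F s m = 0))"

text \<open>Probability that the chain started at x first enters the absorbing set A
  exactly at time n, and does so at state t.\<close>
fun absorb_at :: "('a::finite \<Rightarrow> 'a \<Rightarrow> real) \<Rightarrow> 'a set \<Rightarrow> 'a \<Rightarrow> 'a \<Rightarrow> nat \<Rightarrow> real" where
  "absorb_at P A t x 0 = (if x \<in> A \<and> x = t then 1 else 0)"
| "absorb_at P A t x (Suc n) =
     (if x \<in> A then 0 else (\<Sum>y\<in>UNIV. P x y * absorb_at P A t y n))"

definition absorb_prob :: "('a::finite \<Rightarrow> 'a \<Rightarrow> real) \<Rightarrow> 'a set \<Rightarrow> 'a \<Rightarrow> 'a \<Rightarrow> real" where
  "absorb_prob P A t x = (\<Sum>n. absorb_at P A t x n)"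

definition avoid_fund :: "('a::finite \<Rightarrow> 'a \<Rightarrow> real) \<Rightarrow> 'a \<Rightarrow> 'a \<Rightarrow> 'a \<Rightarrow> 'a \<Rightarrow> real" where
  "avoid_fund P t k s m =
     fund_mat P {t, k} s m * absorb_prob P {t, k} t m / absorb_prob P {t, k} t s"

end

theory Submission
  imports Defs "HOL-Analysis.Cartesian_Space"
begin

text \<open>Since k is reachable from every state, a function that vanishes on an absorbing set
  containing k and is harmonic off it vanishes identically (minimum principle), so the fundamental
  matrix and the absorption probabilities are the unique solutions of their first-step equations.
  Write F for the fundamental matrix of {k}. Adding t to the absorbing set, the rank-one update
  F x y - F x t * F t y / F t t solves the equations for {t, k} (it counts the visits to y that
  are not preceded by a visit to t), and x \<mapsto> F x t / F t t is harmonic off {t, k} with boundary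
  values 1 at t and 0 at k, hence is the probability of being absorbed at t. Substituting both
  into the definition of the avoidance fundamental matrix gives the formula.\<close>

definition harmonic_off :: "('a::finite \<Rightarrow> 'a \<Rightarrow> real) \<Rightarrow> 'a set \<Rightarrow> ('a \<Rightarrow> real) \<Rightarrow> bool" where
  "harmonic_off P A h \<longleftrightarrow> (\<forall>x. x \<notin> A \<longrightarrow> h x = (\<Sum>y\<in>UNIV. P x y * h y))"

definition fund_eqns :: "('a::finite \<Rightarrow> 'a \<Rightarrow> real) \<Rightarrow> 'a set \<Rightarrow> ('a \<Rightarrow> 'a \<Rightarrow> real) \<Rightarrow> bool" where
  "fund_eqns P A F \<longleftrightarrow>
     (\<forall>s m. s \<notin> A \<longrightarrow> m \<notin> A \<longrightarrow> F s m = (if s = m then 1 else 0) + (\<Sum>j\<in>UNIV. P s j * F j m)) \<and>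
     (\<forall>s m. s \<in> A \<or> m \<in> A \<longrightarrow> F s m = 0)"

lemma fund_mat_eq_The: "fund_mat P A = (THE F. fund_eqns P A F)"
proof -
  have "(\<forall>s m. s \<notin> A \<and> m \<notin> A \<longrightarrow>
          (\<Sum>j\<in>-A. ((if s = j then 1 else 0) - P s j) * F j m) = (if s = m then 1 else 0)) \<and>
        (\<forall>s m. s \<in> A \<or> m \<in> A \<longrightarrow> F s m = 0) \<longleftrightarrow> fund_eqns P A F" for F
  proof (cases "\<forall>s m. s \<in> A \<or> m \<in> A \<longrightarrow> F s m = 0")
    case zero: True
    have "(\<Sum>j\<in>-A. ((if s = j then 1 else 0) - P s j) * F j m) = F s m - (\<Sum>j\<in>UNIV. P s j * F j m)"
      if "s \<notin> A" for s m
    proof -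
      have "(\<Sum>j\<in>-A. ((if s = j then 1 else 0) - P s j) * F j m)
          = (\<Sum>j\<in>-A. (if s = j then F j m else 0) - P s j * F j m)"
        by (rule sum.cong) (auto simp: algebra_simps)
      also have "\<dots> = F s m - (\<Sum>j\<in>-A. P s j * F j m)"
        using that by (simp add: sum_subtractf)
      also have "(\<Sum>j\<in>-A. P s j * F j m) = (\<Sum>j\<in>UNIV. P s j * F j m)"
        by (rule sum.mono_neutral_left) (use zero in auto)
      finally show ?thesis .
    qed
    with zero show ?thesis
      unfolding fund_eqns_def by (auto simp: diff_eq_eq)
  qed (auto simp: fund_eqns_def)
  then show ?thesis
    unfolding fund_mat_def by simp
qed

definition absorb_partial :: "('a::finite \<Rightarrow> 'a \<Rightarrow> real) \<Rightarrow> 'a set \<Rightarrow> 'a \<Rightarrow> 'a \<Rightarrow> nat \<Rightarrow> real" where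
  "absorb_partial P A t x N = (\<Sum>n<N. absorb_at P A t x n)"

lemma absorb_partial_Suc:
  "absorb_partial P A t x (Suc N) =
     (if x \<in> A \<and> x = t then 1 else 0) +
     (if x \<in> A then 0 else (\<Sum>y\<in>UNIV. P x y * absorb_partial P A t y N))"
proof (cases "x \<in> A")
  case False
  have "(\<Sum>n<N. absorb_at P A t x (Suc n)) = (\<Sum>y\<in>UNIV. P x y * absorb_partial P A t y N)"
    using False by (simp add: absorb_partial_def sum_distrib_left sum.swap[of _ "{..<N}"])
  with False show ?thesis
    by (simp add: absorb_partial_def sum.lessThan_Suc_shift del: sum.lessThan_Suc)
qed (simp add: absorb_partial_def sum.lessThan_Suc_shift del: sum.lessThan_Suc)

locale absorbing_chain =
  fixes P :: "'a::finite \<Rightarrow> 'a \<Rightarrow> real" and k :: 'a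
  assumes stochastic: "stochastic P"
    and reaches_k: "\<forall>i. (i, k) \<in> {(a, b). 0 < P a b}\<^sup>*"
begin

lemma P_nonneg: "0 \<le> P x y"
  using stochastic by (simp add: stochastic_def)

lemma P_row_sum: "(\<Sum>y\<in>UNIV. P x y) = 1"
  using stochastic by (simp add: stochastic_def)

lemma superharmonic_nonneg:
  assumes "k \<in> A" and zero: "\<forall>a\<in>A. h a = 0"
    and super: "\<forall>x. x \<notin> A \<longrightarrow> (\<Sum>y\<in>UNIV. P x y * h y) \<le> h x"
  shows "0 \<le> h x"
proof (rule ccontr)
  assume "\<not> 0 \<le> h x"
  define \<mu> where "\<mu> = Min (range h)"
  have \<mu>_le: "\<mu> \<le> h y" for y
    unfolding \<mu>_def by simp
  have "\<mu> \<in> range h"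
    unfolding \<mu>_def by (rule Min_in) auto
  then obtain x0 where x0: "h x0 = \<mu>"
    by auto
  have \<mu>_neg: "\<mu> < 0"
    using \<mu>_le[of x] \<open>\<not> 0 \<le> h x\<close> by linarith
  \<comment> \<open>A state outside A averages h over its successors, so the minimum spreads along edges.\<close>
  have min_step: "h y = \<mu>" if "h x = \<mu>" "0 < P x y" for x y
  proof -
    have "x \<notin> A"
      using that(1) zero \<mu>_neg by auto
    have "(\<Sum>z\<in>UNIV. P x z * (h z - \<mu>)) = (\<Sum>z\<in>UNIV. P x z * h z) - \<mu>"
      by (simp add: right_diff_distrib sum_subtractf flip: sum_distrib_right) (simp add: P_row_sum)
    also have "\<dots> \<le> 0"
      using super \<open>x \<notin> A\<close> that(1) by auto
    finally have "(\<Sum>z\<in>UNIV. P x z * (h z - \<mu>)) = 0"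
      by (intro antisym sum_nonneg) (auto intro: mult_nonneg_nonneg P_nonneg simp: \<mu>_le)
    then have "P x y * (h y - \<mu>) = 0"
      using sum_nonneg_eq_0_iff[of UNIV "\<lambda>z. P x z * (h z - \<mu>)"] P_nonneg \<mu>_le by simp
    with that(2) show ?thesis
      by simp
  qed
  have "(x0, k) \<in> {(a, b). 0 < P a b}\<^sup>*"
    using reaches_k by blast
  then have "h k = \<mu>"
    by (induction rule: rtrancl_induct) (use x0 min_step in auto)
  with \<open>k \<in> A\<close> zero \<mu>_neg show False
    by auto
qed

lemma harmonic_off_vanishes:
  assumes "k \<in> A" "\<forall>a\<in>A. h a = 0" "harmonic_off P A h"
  shows "h x = 0"
proof -
  have "0 \<le> h x"
    using assms by (intro superharmonic_nonneg) (auto simp: harmonic_off_def)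
  moreover have "0 \<le> - h x"
    using assms by (intro superharmonic_nonneg[of A "\<lambda>y. - h y"])
      (auto simp: harmonic_off_def sum_negf)
  ultimately show ?thesis
    by linarith
qed

lemma fund_eqns_unique:
  assumes "k \<in> A" "fund_eqns P A F" "fund_eqns P A G"
  shows "F = G"
proof (intro ext)
  fix s m
  show "F s m = G s m"
  proof (cases "m \<in> A")
    case True
    with assms(2,3) show ?thesis
      by (simp add: fund_eqns_def)
  next
    case False
    have "F s m - G s m = 0"
    proof (rule harmonic_off_vanishes[of A "\<lambda>j. F j m - G j m", OF \<open>k \<in> A\<close>])
      show "\<forall>a\<in>A. F a m - G a m = 0"
        using assms(2,3) by (simp add: fund_eqns_def)
      show "harmonic_off P A (\<lambda>j. F j m - G j m)"
        using assms(2,3) False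
        by (auto simp: harmonic_off_def fund_eqns_def right_diff_distrib sum_subtractf)
    qed
    then show ?thesis
      by simp
  qed
qed

lemma fund_eqns_solvable:
  assumes "k \<in> A"
  obtains F where "fund_eqns P A F"
proof -
  \<comment> \<open>I - P with identity rows on A: injective by the minimum principle, hence surjective.\<close>
  define L :: "real^'a \<Rightarrow> real^'a" where
    "L v = (\<chi> s. if s \<in> A then v$s else v$s - (\<Sum>j\<in>UNIV. P s j * v$j))" for v
  have "linear L"
    by (rule linearI)
      (simp_all add: L_def vec_eq_iff sum.distrib algebra_simps sum_distrib_left)
  have "inj L"
    unfolding linear_inj_iff_eq_0[OF \<open>linear L\<close>]
  proof (intro allI impI)
    fix v assume "L v = 0"
    have Lv: "(if s \<in> A then v$s else v$s - (\<Sum>j\<in>UNIV. P s j * v$j)) = 0" for s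
      using arg_cong[OF \<open>L v = 0\<close>, of "\<lambda>w. w $ s"] unfolding L_def by simp
    have "v$x = 0" for x
    proof (rule harmonic_off_vanishes[of A "\<lambda>j. v$j", OF assms])
      show "\<forall>a\<in>A. v$a = 0"
        using Lv by (metis (full_types))
      show "harmonic_off P A (\<lambda>j. v$j)"
        unfolding harmonic_off_def using Lv by (metis (full_types) eq_iff_diff_eq_0)
    qed
    then show "v = 0"
      by (simp add: vec_eq_iff)
  qed
  have "surj L"
    using linear_injective_imp_surjective[OF \<open>linear L\<close> \<open>inj L\<close>] by simp
  define V where "V m = inv L (\<chi> s. if s = m then 1 else 0)" for m
  have V: "L (V m) = (\<chi> s. if s = m then 1 else 0)" for m
    unfolding V_def using \<open>surj L\<close> by (rule surj_f_inv_f)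
  have V_row: "V m $ s = (if s = m then 1 else 0) + (\<Sum>j\<in>UNIV. P s j * V m $ j)"
    if "s \<notin> A" for s m
    using arg_cong[OF V[of m], of "\<lambda>w. w $ s"] that by (simp add: L_def diff_eq_eq)
  have V_boundary: "V m $ a = 0" if "a \<in> A" "m \<notin> A" for a m
    using arg_cong[OF V[of m], of "\<lambda>w. w $ a"] that by (auto simp: L_def)
  define F where "F s m = (if s \<in> A \<or> m \<in> A then 0 else V m $ s)" for s m
  have F_V: "F j m = V m $ j" if "m \<notin> A" for j m
    using V_boundary that by (auto simp: F_def)
  have "fund_eqns P A F"
    unfolding fund_eqns_def
  proof (intro conjI allI impI)
    fix s m assume "s \<notin> A" "m \<notin> A"
    then show "F s m = (if s = m then 1 else 0) + (\<Sum>j\<in>UNIV. P s j * F j m)"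
      using V_row[of s m] by (simp add: F_V)
  qed (auto simp: F_def)
  then show ?thesis ..
qed

lemma fund_eqns_fund_mat:
  assumes "k \<in> A"
  shows "fund_eqns P A (fund_mat P A)"
proof -
  have "\<exists>!F. fund_eqns P A F"
    using fund_eqns_solvable[OF assms] fund_eqns_unique[OF assms] by metis
  then show ?thesis
    unfolding fund_mat_eq_The by (rule theI')
qed

lemma fund_mat_eqI:
  assumes "k \<in> A" "fund_eqns P A F"
  shows "fund_mat P A = F"
  using fund_eqns_unique[OF assms(1) fund_eqns_fund_mat[OF assms(1)] assms(2)] .

lemma fund_mat_zero: "k \<in> A \<Longrightarrow> s \<in> A \<or> m \<in> A \<Longrightarrow> fund_mat P A s m = 0"
  using fund_eqns_fund_mat[of A] unfolding fund_eqns_def by blast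

lemma fund_mat_row:
  "k \<in> A \<Longrightarrow> s \<notin> A \<Longrightarrow> m \<notin> A \<Longrightarrow>
    fund_mat P A s m = (if s = m then 1 else 0) + (\<Sum>j\<in>UNIV. P s j * fund_mat P A j m)"
  using fund_eqns_fund_mat[of A] unfolding fund_eqns_def by blast

lemma fund_mat_nonneg:
  assumes "k \<in> A"
  shows "0 \<le> fund_mat P A s m"
proof (cases "m \<in> A")
  case True
  then show ?thesis
    using fund_mat_zero[OF assms] by simp
next
  case False
  show ?thesis
    by (rule superharmonic_nonneg[OF assms])
      (use fund_mat_zero[OF assms] fund_mat_row[OF assms _ False] in auto)
qed

lemma fund_mat_diag_ge_1:
  assumes "k \<in> A" "t \<notin> A"
  shows "1 \<le> fund_mat P A t t"
proof -
  have "0 \<le> (\<Sum>j\<in>UNIV. P t j * fund_mat P A j t)"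
    using P_nonneg fund_mat_nonneg[OF assms(1)] by (intro sum_nonneg) simp
  then show ?thesis
    using fund_mat_row[OF assms(1,2,2)] by simp
qed

lemma fund_mat_insert:
  assumes "k \<in> A" "t \<notin> A" "m \<notin> insert t A"
  shows "fund_mat P (insert t A) s m =
    fund_mat P A s m - fund_mat P A s t * fund_mat P A t m / fund_mat P A t t"
proof -
  let ?F = "fund_mat P A"
  define G where
    "G x y = (if y \<in> insert t A then 0 else ?F x y - ?F x t * ?F t y / ?F t t)" for x y
  have Ftt: "?F t t \<noteq> 0"
    using fund_mat_diag_ge_1[OF assms(1,2)] by simp
  have "fund_eqns P (insert t A) G"
    unfolding fund_eqns_def
  proof (intro conjI allI impI)
    fix x y assume x: "x \<notin> insert t A" and y: "y \<notin> insert t A"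
    have "(\<Sum>j\<in>UNIV. P x j * G j y)
        = (\<Sum>j\<in>UNIV. P x j * ?F j y) - (\<Sum>j\<in>UNIV. P x j * ?F j t) * (?F t y / ?F t t)"
      using y
      by (simp add: G_def right_diff_distrib sum_subtractf sum_distrib_right sum_divide_distrib
          mult.assoc)
    also have "\<dots> = (?F x y - (if x = y then 1 else 0)) - ?F x t * (?F t y / ?F t t)"
      using fund_mat_row[OF assms(1), of x y] fund_mat_row[OF assms(1) _ assms(2), of x] x y by auto
    finally show "G x y = (if x = y then 1 else 0) + (\<Sum>j\<in>UNIV. P x j * G j y)"
      using y by (simp add: G_def)
  next
    fix x y assume "x \<in> insert t A \<or> y \<in> insert t A"
    then show "G x y = 0"
      using Ftt fund_mat_zero[OF assms(1)] assms(2) by (auto simp: G_def)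
  qed
  then have "fund_mat P (insert t A) = G"
    using assms(1) by (intro fund_mat_eqI) auto
  then show ?thesis
    using assms(3) by (simp add: G_def)
qed

lemma absorb_at_nonneg: "0 \<le> absorb_at P A t x n"
  by (induction n arbitrary: x) (simp_all add: sum_nonneg P_nonneg)

lemma absorb_partial_le:
  assumes "harmonic_off P A h" "\<forall>x. 0 \<le> h x" "\<forall>a\<in>A. h a = (if a = t then 1 else 0)"
  shows "absorb_partial P A t x N \<le> h x"
proof (induction N arbitrary: x)
  case 0
  then show ?case
    using assms(2) by (simp add: absorb_partial_def)
next
  case (Suc N)
  show ?case
  proof (cases "x \<in> A")
    case True
    then show ?thesis
      using assms(3) by (simp only: absorb_partial_Suc) simp
  next
    case False
    have "(\<Sum>y\<in>UNIV. P x y * absorb_partial P A t y N) \<le> (\<Sum>y\<in>UNIV. P x y * h y)"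
      using Suc P_nonneg by (intro sum_mono mult_left_mono) auto
    with False assms(1) show ?thesis
      by (simp only: absorb_partial_Suc) (simp add: harmonic_off_def)
  qed
qed

lemma absorb_prob_eqI:
  assumes "k \<in> A" "harmonic_off P A h" "\<forall>x. 0 \<le> h x"
    and boundary: "\<forall>a\<in>A. h a = (if a = t then 1 else 0)"
  shows "absorb_prob P A t = h"
proof
  let ?Q = "absorb_prob P A t"
  have lim: "(absorb_partial P A t x) \<longlonglongrightarrow> ?Q x" for x
  proof -
    have "summable (absorb_at P A t x)"
      by (rule summableI_nonneg_bounded[where x = "h x"])
        (use absorb_at_nonneg absorb_partial_le[OF assms(2-4)] in \<open>auto simp: absorb_partial_def\<close>)
    then show ?thesis
      unfolding absorb_prob_def absorb_partial_def[abs_def] by (rule summable_LIMSEQ)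
  qed
  \<comment> \<open>Passing to the limit in the partial-sum recursion gives the first-step equations for Q.\<close>
  have Q_eq: "?Q x = (if x \<in> A \<and> x = t then 1 else 0) +
      (if x \<in> A then 0 else (\<Sum>y\<in>UNIV. P x y * ?Q y))" for x
  proof -
    have "(\<lambda>N. absorb_partial P A t x (Suc N)) \<longlonglongrightarrow> ?Q x"
      using lim by (rule LIMSEQ_Suc)
    moreover have "(\<lambda>N. absorb_partial P A t x (Suc N)) \<longlonglongrightarrow>
        (if x \<in> A \<and> x = t then 1 else 0) + (if x \<in> A then 0 else (\<Sum>y\<in>UNIV. P x y * ?Q y))"
      unfolding absorb_partial_Suc by (cases "x \<in> A") (simp_all, intro tendsto_intros lim)
    ultimately show ?thesis
      by (rule LIMSEQ_unique)
  qed
  fix x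
  have "?Q x - h x = 0"
  proof (rule harmonic_off_vanishes[of A "\<lambda>y. ?Q y - h y", OF \<open>k \<in> A\<close>])
    show "\<forall>a\<in>A. ?Q a - h a = 0"
      using Q_eq boundary by auto
    show "harmonic_off P A (\<lambda>y. ?Q y - h y)"
      using Q_eq assms(2) by (auto simp: harmonic_off_def right_diff_distrib sum_subtractf)
  qed
  then show "?Q x = h x"
    by simp
qed

lemma absorb_prob_insert:
  assumes "k \<in> A" "t \<notin> A"
  shows "absorb_prob P (insert t A) t x = fund_mat P A x t / fund_mat P A t t"
proof -
  let ?F = "fund_mat P A"
  have "absorb_prob P (insert t A) t = (\<lambda>x. ?F x t / ?F t t)"
  proof (rule absorb_prob_eqI)
    show "harmonic_off P (insert t A) (\<lambda>x. ?F x t / ?F t t)"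
      using fund_mat_row[OF assms(1) _ assms(2)]
      by (auto simp: harmonic_off_def sum_divide_distrib[symmetric] mult.commute)
    show "\<forall>x. 0 \<le> ?F x t / ?F t t"
      using fund_mat_nonneg[OF assms(1)] by simp
    show "\<forall>a\<in>insert t A. ?F a t / ?F t t = (if a = t then 1 else 0)"
      using fund_mat_diag_ge_1[OF assms] fund_mat_zero[OF assms(1)] assms(2) by auto
  qed (use assms(1) in simp)
  then show ?thesis
    by simp
qed

end

theorem mainTheorem1:
  fixes P :: "'a::finite \<Rightarrow> 'a \<Rightarrow> real" and k s m t :: 'a
  assumes "stochastic P"
    and "P k k = 1"
    and "\<forall>i. (i, k) \<in> {(a, b). 0 < P a b}\<^sup>*"
    and "s \<noteq> k" "m \<noteq> k" "t \<noteq> k" "s \<noteq> t" "m \<noteq> t"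
    and "fund_mat P {k} s t > 0"
  shows "avoid_fund P t k s m =
    fund_mat P {k} m t *
      (fund_mat P {k} s m / fund_mat P {k} s t - fund_mat P {k} t m / fund_mat P {k} t t)"
proof -
  interpret absorbing_chain P k
    using assms(1,3) by unfold_locales
  let ?F = "fund_mat P {k}"
  have "t \<notin> {k}"
    using assms(6) by simp
  have Q: "absorb_prob P {t, k} t x = ?F x t / ?F t t" for x
    using absorb_prob_insert[of "{k}" t] \<open>t \<notin> {k}\<close> by simp
  have G: "fund_mat P {t, k} s m = ?F s m - ?F s t * ?F t m / ?F t t"
    using fund_mat_insert[of "{k}" t m] \<open>t \<notin> {k}\<close> assms(5,8) by simp
  have "1 \<le> ?F t t"
    using fund_mat_diag_ge_1[of "{k}" t] \<open>t \<notin> {k}\<close> by simp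
  with assms(9) show ?thesis
    unfolding avoid_fund_def Q G by (simp add: field_simps)
qed

end
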